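(* Let $k\ge 1$, $n\ge 2$, and let $s,t\in S(n,k)$ be compatible. Let $\alpha$ be the number of occurrences in $s$ of a most frequent symbol of $s$. Then $d(s,t)\le 2(n-\alpha)$.
   Context: Strings here are arbitrary (not normalized) finite words. The prefix reversal (flip) $f^{(i)}$ applied to $s=s_1\cdots s_n$ ($1\le i\le n$) yields $s_i s_{i-1}\cdots s_1 s_{i+1}\cdots s_n$. Two strings are \emph{compatible} if each symbol occurs the same number of times in both. For compatible $s,t$, $d(s,t)$ is the minimum number of prefix reversals transforming $s$ into $t$. $S(n,k)$ is the set of strings of length $n$ whose set of occurring symbols is exactly $\{0,\dots,k-1\}$. *)

theory Defs
  imports "HOL-Library.Multiset"
begin

definition flip :: "nat \<Rightarrow> nat list \<Rightarrow> nat list" where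
  "flip i s = rev (take i s) @ drop i s"

fun apply_flips :: "nat list \<Rightarrow> nat list \<Rightarrow> nat list" where
  "apply_flips [] s = s"
| "apply_flips (i # is) s = apply_flips is (flip i s)"

definition valid_flips :: "nat \<Rightarrow> nat list \<Rightarrow> bool" where
  "valid_flips n is \<longleftrightarrow> (\<forall>i \<in> set is. 1 \<le> i \<and> i \<le> n)"

definition compatible :: "nat list \<Rightarrow> nat list \<Rightarrow> bool" where
  "compatible s t \<longleftrightarrow> mset s = mset t"

definition flip_dist :: "nat list \<Rightarrow> nat list \<Rightarrow> nat" where
  "flip_dist s t = (LEAST m. \<exists>is. length is = m \<and> valid_flips (length s) is \<and> apply_flips is s = t)"

definition S :: "nat \<Rightarrow> nat \<Rightarrow> nat list set" where
  "S n k = {s. length s = n \<and> set s = {0..<k}}"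

definition max_mult :: "nat list \<Rightarrow> nat" where
  "max_mult s = Max ((\<lambda>a. count (mset s) a) ` set s)"

end

theory Submission
  imports Defs
begin

text \<open>Fix a most frequent symbol \<open>a\<close> of \<open>s\<close> and build \<open>t\<close> from its last position
  backwards. If the last symbol \<open>y\<close> of \<open>t\<close> differs from \<open>a\<close>, two flips move an occurrence
  of \<open>y\<close> in \<open>s\<close> to the end, and we recurse on the prefixes. Since flips are involutions, flip
  sequences can be reversed, so the same works when the last symbol of \<open>s\<close> differs from \<open>a\<close>.
  If both last symbols equal \<open>a\<close>, no flip is needed. Every pair of flips thus fixes one
  occurrence of a symbol other than \<open>a\<close>, giving at most \<open>2(n - \<alpha>)\<close> flips.\<close>

lemma length_flip [simp]: "length (flip i s) = length s"
  by (simp add: flip_def)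

lemma flip_flip [simp]: "flip i (flip i s) = s"
  by (cases "i \<le> length s") (simp_all add: flip_def min_def)

lemma flip_append: "i \<le> length u \<Longrightarrow> flip i (u @ w) = flip i u @ w"
  by (simp add: flip_def)

lemma length_apply_flips [simp]: "length (apply_flips is s) = length s"
  by (induction "is" arbitrary: s) simp_all

lemma apply_flips_append: "apply_flips (is @ js) s = apply_flips js (apply_flips is s)"
  by (induction "is" arbitrary: s) simp_all

lemma apply_flips_rev: "apply_flips (rev is) (apply_flips is s) = s"
  by (induction "is" arbitrary: s) (simp_all add: apply_flips_append)

lemma apply_flips_append_suffix:
  "valid_flips (length u) is \<Longrightarrow> apply_flips is (u @ w) = apply_flips is u @ w"
  by (induction "is" arbitrary: u) (simp_all add: valid_flips_def flip_append)

definition flip_reach :: "nat \<Rightarrow> nat list \<Rightarrow> nat list \<Rightarrow> bool" where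
  "flip_reach m s t \<longleftrightarrow>
     (\<exists>is. valid_flips (length s) is \<and> length is \<le> m \<and> apply_flips is s = t)"

lemma flip_reach_refl: "flip_reach m s s"
  unfolding flip_reach_def valid_flips_def by (intro exI[of _ "[]"]) simp

lemma flip_reach_sym: "flip_reach m s t \<Longrightarrow> flip_reach m t s"
  unfolding flip_reach_def valid_flips_def by (metis apply_flips_rev length_apply_flips length_rev set_rev)

lemma flip_reach_trans:
  assumes "flip_reach m s t" and "flip_reach m' t u"
  shows "flip_reach (m + m') s u"
proof -
  obtain "is" js where "valid_flips (length s) is" "length is \<le> m" "apply_flips is s = t"
    and "valid_flips (length t) js" "length js \<le> m'" "apply_flips js t = u"
    using assms unfolding flip_reach_def by blast
  then show ?thesis
    unfolding flip_reach_def valid_flips_def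
    by (intro exI[of _ "is @ js"]) (auto simp: apply_flips_append)
qed

lemma flip_reach_append_suffix: "flip_reach m u u' \<Longrightarrow> flip_reach m (u @ w) (u' @ w)"
  unfolding flip_reach_def valid_flips_def
  by (metis apply_flips_append_suffix valid_flips_def le_add1 length_append order_trans)

lemma flip_reach_move_to_end: "flip_reach 2 (u @ y # v) ((rev v @ u) @ [y])"
  unfolding flip_reach_def valid_flips_def
  by (intro exI[of _ "[Suc (length u), length (u @ y # v)]"]) (simp add: flip_def)

lemma flip_dist_le: "flip_reach m s t \<Longrightarrow> flip_dist s t \<le> m"
  unfolding flip_reach_def flip_dist_def by (metis (mono_tags, lifting) Least_le order_trans)

lemma flip_reach_fix_last:
  assumes IH: "\<And>s' t'. mset s' = mset t' \<Longrightarrow> length s' = m \<Longrightarrow>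
                 flip_reach (2 * (m - count (mset s') a)) s' t'"
    and mset_eq: "mset s = mset (t0 @ [y])" and "length s = Suc m" and "y \<noteq> a"
  shows "flip_reach (2 * (Suc m - count (mset s) a)) s (t0 @ [y])"
proof -
  have "y \<in> set s" using mset_eq by (metis in_set_conv_decomp mset_eq_setD)
  then obtain u v where s: "s = u @ y # v" by (meson split_list)
  define s' where "s' = rev v @ u"
  have "length s' = m" using s \<open>length s = Suc m\<close> by (simp add: s'_def)
  have "mset s' = mset t0" using mset_eq by (simp add: s s'_def add.commute)
  have count_eq: "count (mset s') a = count (mset s) a"
    using \<open>y \<noteq> a\<close> by (simp add: s s'_def)
  have "flip_reach 2 s (s' @ [y])"
    unfolding s s'_def by (rule flip_reach_move_to_end)
  moreover have "flip_reach (2 * (m - count (mset s) a)) (s' @ [y]) (t0 @ [y])"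
    using IH[OF \<open>mset s' = mset t0\<close> \<open>length s' = m\<close>] count_eq
    by (simp add: flip_reach_append_suffix)
  ultimately have "flip_reach (2 + 2 * (m - count (mset s) a)) s (t0 @ [y])"
    by (rule flip_reach_trans)
  moreover have "count (mset s) a \<le> m"
    using count_eq \<open>length s' = m\<close> by (metis count_le_size size_mset)
  ultimately show ?thesis by (simp add: Suc_diff_le)
qed

lemma flip_reach_compatible:
  "mset s = mset t \<Longrightarrow> flip_reach (2 * (length s - count (mset s) a)) s t"
proof (induction "length s" arbitrary: s t)
  case 0
  then show ?case by (simp add: flip_reach_refl)
next
  case (Suc m)
  have IH: "flip_reach (2 * (m - count (mset s') a)) s' t'"
    if "mset s' = mset t'" "length s' = m" for s' t'
    using Suc.hyps(1) that by blast
  have "length t = Suc m" using Suc by (metis mset_eq_length)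
  obtain s0 x where s: "s = s0 @ [x]"
    using Suc.hyps(2) by (metis length_Suc_conv_rev)
  obtain t0 y where t: "t = t0 @ [y]"
    using \<open>length t = Suc m\<close> by (metis length_Suc_conv_rev)
  consider "y \<noteq> a" | "x \<noteq> a" | "x = a" "y = a" by blast
  then show ?case
  proof cases
    case 1
    then show ?thesis
      using flip_reach_fix_last[OF IH] Suc.prems Suc.hyps(2) t by simp
  next
    case 2
    have "flip_reach (2 * (Suc m - count (mset t) a)) t (s0 @ [x])"
      by (rule flip_reach_fix_last[OF IH])
        (use Suc.prems \<open>length t = Suc m\<close> s 2 in simp_all)
    then show ?thesis
      using Suc.prems Suc.hyps(2) s by (simp add: flip_reach_sym)
  next
    case 3
    have "mset s0 = mset t0" "length s0 = m"
      using Suc.prems Suc.hyps(2) s t 3 by simp_all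
    from IH[OF this] have "flip_reach (2 * (m - count (mset s0) a)) s t"
      using s t 3 by (simp add: flip_reach_append_suffix)
    then show ?thesis
      using Suc.hyps(2) s 3 by simp
  qed
qed

theorem lemma5p2:
  fixes n k :: nat and s t :: "nat list"
  assumes "k \<ge> 1" and "n \<ge> 2"
    and "s \<in> S n k" and "t \<in> S n k"
    and "compatible s t"
  shows "flip_dist s t \<le> 2 * (n - max_mult s)"
proof -
  have "length s = n" using assms(3) by (simp add: S_def)
  with assms(2) have "set s \<noteq> {}" by auto
  then have "max_mult s \<in> (\<lambda>a. count (mset s) a) ` set s"
    unfolding max_mult_def by (intro Max_in) auto
  then obtain a where a: "max_mult s = count (mset s) a" by auto
  have "flip_reach (2 * (n - count (mset s) a)) s t"
    using flip_reach_compatible assms(5) \<open>length s = n\<close> by (auto simp: compatible_def)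
  then show ?thesis
    by (simp add: a flip_dist_le)
qed

end
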